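(* Let $G$ be a connected split graph with at least two vertices. A vertex $v\in V(G)$ is an $\mathcal{F}$-branch leaf of some DFS ordering of $G$ if and only if $v$ is not a cut vertex of $G$.
   Context: Graphs are finite, simple, undirected. A split graph is a graph whose vertex set can be partitioned into a clique and an independent set. A vertex ordering of $G$ is a bijection $\sigma:\{1,\dots,n\}\to V(G)$; $u\prec_\sigma w$ means $u$ comes before $w$. DFS orderings are produced by the label search: initially all labels are $\emptyset$; for $i=1,\dots,n$ choose any unnumbered vertex $x$ such that there is no unnumbered $y$ with $\mathrm{label}(x)\prec\mathrm{label}(y)$, set $\sigma(i)=x$, and add $i$ to the labels of the unnumbered neighbors of $x$, where $A\prec B$ iff ($A=\emptyset$ and $B\neq\emptyset$) or $\max(A)<\max(B)$. The $\mathcal{F}$-tree of $\sigma$ is the spanning tree containing, for each $v\neq\sigma(1)$, the edge from $v$ to its leftmost neighbor in $\sigma$. A vertex $v\neq\sigma(1)$ that is a leaf of the $\mathcal{F}$-tree is an $\mathcal{F}$-branch leaf of $\sigma$. *)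

theory Defs
  imports Main
begin

definition graph :: "'a set \<Rightarrow> ('a \<Rightarrow> 'a \<Rightarrow> bool) \<Rightarrow> bool" where
  "graph V E \<longleftrightarrow> finite V \<and> (\<forall>x y. E x y \<longrightarrow> x \<in> V \<and> y \<in> V)
     \<and> (\<forall>x y. E x y \<longrightarrow> E y x) \<and> (\<forall>x. \<not> E x x)"

definition reach_in :: "'a set \<Rightarrow> ('a \<Rightarrow> 'a \<Rightarrow> bool) \<Rightarrow> 'a \<Rightarrow> 'a \<Rightarrow> bool" where
  "reach_in S E = (\<lambda>a b. E a b \<and> a \<in> S \<and> b \<in> S)\<^sup>*\<^sup>*"

definition connected_graph :: "'a set \<Rightarrow> ('a \<Rightarrow> 'a \<Rightarrow> bool) \<Rightarrow> bool" where
  "connected_graph V E \<longleftrightarrow> V \<noteq> {} \<and> (\<forall>x\<in>V. \<forall>y\<in>V. reach_in V E x y)"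

text \<open>v is a cut vertex: deleting v disconnects two vertices that were connected
(equivalently, increases the number of connected components).\<close>
definition cut_vertex :: "'a set \<Rightarrow> ('a \<Rightarrow> 'a \<Rightarrow> bool) \<Rightarrow> 'a \<Rightarrow> bool" where
  "cut_vertex V E v \<longleftrightarrow> v \<in> V \<and> (\<exists>x\<in>V - {v}. \<exists>y\<in>V - {v}.
      reach_in V E x y \<and> \<not> reach_in (V - {v}) E x y)"

definition split_graph :: "'a set \<Rightarrow> ('a \<Rightarrow> 'a \<Rightarrow> bool) \<Rightarrow> bool" where
  "split_graph V E \<longleftrightarrow> (\<exists>K I. K \<union> I = V \<and> K \<inter> I = {}
      \<and> (\<forall>x\<in>K. \<forall>y\<in>K. x \<noteq> y \<longrightarrow> E x y) \<and> (\<forall>x\<in>I. \<forall>y\<in>I. \<not> E x y))"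

text \<open>Vertex orderings are lists: sigma(i) = xs ! (i - 1) for i = 1..n.\<close>
definition vertex_ordering :: "'a set \<Rightarrow> 'a list \<Rightarrow> bool" where
  "vertex_ordering V xs \<longleftrightarrow> distinct xs \<and> set xs = V"

definition label_prec :: "nat set \<Rightarrow> nat set \<Rightarrow> bool" where
  "label_prec A B \<longleftrightarrow> (A = {} \<and> B \<noteq> {}) \<or> (A \<noteq> {} \<and> B \<noteq> {} \<and> Max A < Max B)"

text \<open>Label of vertex u just before step number i+1 (1-based), i.e. after the
first i vertices xs!0..xs!(i-1) (numbers 1..i) have been numbered.\<close>
definition dfs_label :: "('a \<Rightarrow> 'a \<Rightarrow> bool) \<Rightarrow> 'a list \<Rightarrow> nat \<Rightarrow> 'a \<Rightarrow> nat set" where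
  "dfs_label E xs i u = {j + 1 | j. j < i \<and> E (xs ! j) u}"

definition dfs_ordering :: "'a set \<Rightarrow> ('a \<Rightarrow> 'a \<Rightarrow> bool) \<Rightarrow> 'a list \<Rightarrow> bool" where
  "dfs_ordering V E xs \<longleftrightarrow> vertex_ordering V xs \<and>
     (\<forall>i < length xs. \<forall>k. i < k \<and> k < length xs \<longrightarrow>
        \<not> label_prec (dfs_label E xs i (xs ! i)) (dfs_label E xs i (xs ! k)))"

definition leftmost_nb :: "('a \<Rightarrow> 'a \<Rightarrow> bool) \<Rightarrow> 'a list \<Rightarrow> 'a \<Rightarrow> 'a" where
  "leftmost_nb E xs v = xs ! (LEAST j. j < length xs \<and> E (xs ! j) v)"

definition F_tree :: "'a set \<Rightarrow> ('a \<Rightarrow> 'a \<Rightarrow> bool) \<Rightarrow> 'a list \<Rightarrow> 'a set set" where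
  "F_tree V E xs = {{v, leftmost_nb E xs v} | v. v \<in> V \<and> v \<noteq> hd xs}"

definition F_branch_leaf :: "'a set \<Rightarrow> ('a \<Rightarrow> 'a \<Rightarrow> bool) \<Rightarrow> 'a list \<Rightarrow> 'a \<Rightarrow> bool" where
  "F_branch_leaf V E xs v \<longleftrightarrow> v \<in> V \<and> v \<noteq> hd xs \<and>
     card {e \<in> F_tree V E xs. v \<in> e} = 1"

end

theory Submission
  imports Defs
begin

text \<open>If v is a cut vertex, the first vertex w (in the ordering) of a component of G - v
  avoiding the root can only have v as its leftmost neighbour, while v, not being the root,
  has a leftmost neighbour of its own preceding w; so v has degree at least two in the
  F-tree.

  Conversely, take a split partition of G into a clique K and an independent set I.
  Listing K first and then I by decreasing position of the last clique neighbour is a DFS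
  ordering, in which a clique vertex hangs at the first vertex and an independent vertex
  at its first clique neighbour. Putting v into I, or last into K, makes v childless,
  unless some independent vertex has v as its only neighbour; for a non-cut vertex v this
  forces G to be a single edge.\<close>

lemma rtranclp_leaves_set:
  assumes "R\<^sup>*\<^sup>* a b" "a \<in> S" "b \<notin> S"
  shows "\<exists>c d. R c d \<and> c \<in> S \<and> d \<notin> S"
  using assms by (induction rule: rtranclp.induct) auto

lemma reach_in_sym:
  assumes "\<And>x y. E x y \<Longrightarrow> E y x" "reach_in S E a b"
  shows "reach_in S E b a"
proof -
  have "symp (\<lambda>a b. E a b \<and> a \<in> S \<and> b \<in> S)"
    using assms(1) by (auto intro: sympI)
  then show ?thesis
    using assms(2) unfolding reach_in_def by (blast dest: symp_rtranclp sympD)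
qed

lemma graph_sym: "graph V E \<Longrightarrow> E x y \<Longrightarrow> E y x"
  and graph_edge_in: "graph V E \<Longrightarrow> E x y \<Longrightarrow> x \<in> V \<and> y \<in> V"
  by (auto simp: graph_def)

lemma connected_graph_has_neighbour:
  assumes "graph V E" "connected_graph V E" "2 \<le> card V" "x \<in> V"
  shows "\<exists>y. E x y"
proof -
  have "\<not> V \<subseteq> {x}"
    using assms(3) card_mono[of "{x}" V] by auto
  then obtain y where y: "y \<in> V" "y \<noteq> x" by blast
  then have "reach_in V E x y"
    using assms(2,4) by (simp add: connected_graph_def)
  then show ?thesis
    using rtranclp_leaves_set[of _ x y "{x}"] y unfolding reach_in_def by blast
qed

lemma cut_vertex_separates:
  assumes "graph V E" "cut_vertex V E v" "h \<in> V - {v}"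
  shows "\<exists>z\<in>V - {v}. \<not> reach_in (V - {v}) E h z"
proof -
  obtain x y where xy: "x \<in> V - {v}" "y \<in> V - {v}" "\<not> reach_in (V - {v}) E x y"
    using assms(2) by (auto simp: cut_vertex_def)
  have "\<not> (reach_in (V - {v}) E h x \<and> reach_in (V - {v}) E h y)"
    using xy(3) reach_in_sym[of E "V - {v}" h x] graph_sym[OF assms(1)]
    unfolding reach_in_def by (meson rtranclp_trans)
  then show ?thesis using xy by blast
qed

lemma sole_neighbour_not_cut_vertex:
  assumes "graph V E" "connected_graph V E" "\<not> cut_vertex V E v"
    and "v \<in> V" "x \<in> V" "x \<noteq> v" "\<And>u. E x u \<Longrightarrow> u = v"
  shows "V = {x, v}"
proof (rule ccontr)
  assume "V \<noteq> {x, v}"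
  then obtain y where y: "y \<in> V" "y \<noteq> x" "y \<noteq> v" using assms(4,5) by blast
  have "\<not> reach_in (V - {v}) E x y"
    using rtranclp_leaves_set[of _ x y "{x}"] y assms(7) unfolding reach_in_def by blast
  moreover have "reach_in V E x y"
    using assms(2,5) y by (simp add: connected_graph_def)
  ultimately show False
    using assms(3-6) y by (auto simp: cut_vertex_def)
qed

lemma dfs_ordering_earlier_neighbour:
  assumes gr: "graph V E" and con: "connected_graph V E" and dfs: "dfs_ordering V E xs"
    and p: "0 < p" "p < length xs"
  shows "\<exists>j<p. E (xs ! j) (xs ! p)"
proof (rule ccontr)
  assume none: "\<not> (\<exists>j<p. E (xs ! j) (xs ! p))"
  have vo: "distinct xs" "set xs = V"
    using dfs by (auto simp: dfs_ordering_def vertex_ordering_def)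
  let ?S = "set (take p xs)"
  have "reach_in V E (xs ! 0) (xs ! p)"
    using con vo p nth_mem[of 0 xs] nth_mem[of p xs] by (auto simp: connected_graph_def)
  moreover have "xs ! 0 \<in> ?S" "xs ! p \<notin> ?S"
    using p vo by (auto simp: in_set_conv_nth nth_eq_iff_index_eq intro!: exI[of _ 0])
  ultimately obtain c d where cd: "E c d" "c \<in> ?S" "d \<notin> ?S"
    using rtranclp_leaves_set[of _ "xs ! 0" "xs ! p" ?S] unfolding reach_in_def by blast
  obtain j where j: "j < p" "c = xs ! j" using cd(2) by (auto simp: in_set_conv_nth)
  obtain k where k: "k < length xs" "d = xs ! k"
    using cd(1) graph_edge_in[OF gr] vo by (metis in_set_conv_nth)
  have "\<not> k < p"
    using cd(3) k by (force simp: in_set_conv_nth)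
  moreover have "k \<noteq> p"
    using none j k cd(1) by blast
  ultimately have "p < k" by simp
  moreover have "dfs_label E xs p (xs ! p) = {}"
    using none by (auto simp: dfs_label_def)
  moreover have "j + 1 \<in> dfs_label E xs p (xs ! k)"
    using j k cd(1) by (auto simp: dfs_label_def)
  ultimately show False
    using dfs k by (fastforce simp: dfs_ordering_def label_prec_def)
qed

lemma first_index_in_set:
  assumes "x \<in> set xs" "x \<in> C"
  obtains p where "p < length xs" "xs ! p \<in> C" "\<And>j. j < p \<Longrightarrow> xs ! j \<notin> C"
proof -
  let ?P = "\<lambda>p. p < length xs \<and> xs ! p \<in> C"
  obtain q where "?P q" using assms by (metis in_set_conv_nth)
  then have "?P (Least ?P)" by (rule LeastI)
  moreover have "xs ! j \<notin> C" if "j < Least ?P" for j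
    using not_less_Least[OF that] that calculation by auto
  ultimately show thesis using that by blast
qed

lemma leftmost_nb_earlier:
  assumes "j < length xs" "E (xs ! j) w"
  obtains i where "i \<le> j" "leftmost_nb E xs w = xs ! i" "E (xs ! i) w"
proof -
  let ?i = "LEAST i. i < length xs \<and> E (xs ! i) w"
  have "?i < length xs \<and> E (xs ! ?i) w" "?i \<le> j"
    using assms LeastI[of "\<lambda>i. i < length xs \<and> E (xs ! i) w" j] by (auto intro: Least_le)
  then show thesis using that by (simp add: leftmost_nb_def)
qed

lemma leftmost_nb_in_prefix:
  assumes "u \<in> set ys" "E u w"
  shows "leftmost_nb E (ys @ zs) w \<in> set ys"
proof -
  obtain q where q: "q < length ys" "ys ! q = u" using assms(1) by (auto simp: in_set_conv_nth)
  then obtain i where "i \<le> q" "leftmost_nb E (ys @ zs) w = (ys @ zs) ! i"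
    using leftmost_nb_earlier[of q "ys @ zs" E w] assms(2) by (auto simp: nth_append)
  then show ?thesis using q by (simp add: nth_append)
qed

lemma F_branch_leaf_iff:
  assumes "v \<in> V" "v \<noteq> hd xs"
  shows "F_branch_leaf V E xs v \<longleftrightarrow>
    (\<forall>w\<in>V - {hd xs, v}. leftmost_nb E xs w = v \<longrightarrow> w = leftmost_nb E xs v)"
proof -
  define S where "S = {e \<in> F_tree V E xs. v \<in> e}"
  let ?e = "{v, leftmost_nb E xs v}"
  have "?e \<in> S"
    using assms by (auto simp: S_def F_tree_def)
  then have "card S = 1 \<longleftrightarrow> (\<forall>e\<in>S. e = ?e)"
    by (auto simp: card_1_singleton_iff)
  also have "\<dots> \<longleftrightarrow> (\<forall>w\<in>V - {hd xs, v}. leftmost_nb E xs w = v \<longrightarrow> w = leftmost_nb E xs v)"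
    unfolding S_def F_tree_def by (auto simp: doubleton_eq_iff)
  finally show ?thesis using assms by (simp add: F_branch_leaf_def S_def)
qed

lemma leftmost_nb_of_first_in_closed_set:
  assumes "graph V E" "connected_graph V E" "dfs_ordering V E xs"
    and p: "0 < p" "p < length xs" "xs ! p \<in> C" "\<And>j. j < p \<Longrightarrow> xs ! j \<notin> C"
    and closed: "\<And>a b. a \<in> C \<Longrightarrow> E b a \<Longrightarrow> b \<noteq> v \<Longrightarrow> b \<in> C"
  obtains i where "i < p" "xs ! i = v" "leftmost_nb E xs (xs ! p) = v"
proof -
  obtain j where "j < p" "E (xs ! j) (xs ! p)"
    using dfs_ordering_earlier_neighbour[OF assms(1-3) p(1,2)] by blast
  then obtain i where i: "i < p" "leftmost_nb E xs (xs ! p) = xs ! i" "E (xs ! i) (xs ! p)"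
    using leftmost_nb_earlier[of j xs E "xs ! p"] p(2) by (metis le_less_trans less_trans)
  then have "xs ! i = v" using closed[OF p(3)] p(4) by blast
  then show thesis using that i by simp
qed

lemma cut_vertex_not_F_branch_leaf:
  assumes gr: "graph V E" and con: "connected_graph V E" and dfs: "dfs_ordering V E xs"
    and cut: "cut_vertex V E v"
  shows "\<not> F_branch_leaf V E xs v"
proof
  assume leaf: "F_branch_leaf V E xs v"
  have vo: "distinct xs" "set xs = V"
    using dfs by (auto simp: dfs_ordering_def vertex_ordering_def)
  have v: "v \<in> V" "v \<noteq> hd xs" using leaf by (auto simp: F_branch_leaf_def)
  then have "xs \<noteq> []" using vo by auto
  then have hd: "hd xs = xs ! 0" "hd xs \<in> V - {v}"
    using vo v by (auto simp: hd_conv_nth)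
  obtain z where z: "z \<in> V - {v}" "\<not> reach_in (V - {v}) E (hd xs) z"
    using cut_vertex_separates[OF gr cut hd(2)] by blast
  define C where "C = {u \<in> V - {v}. reach_in (V - {v}) E u z}"
  have closed: "\<And>a b. a \<in> C \<Longrightarrow> E b a \<Longrightarrow> b \<noteq> v \<Longrightarrow> b \<in> C"
    using graph_edge_in[OF gr] unfolding C_def reach_in_def
    by (blast intro: converse_rtranclp_into_rtranclp)
  have "z \<in> C" using z by (simp add: C_def reach_in_def)
  then obtain p where p: "p < length xs" "xs ! p \<in> C" "\<And>j. j < p \<Longrightarrow> xs ! j \<notin> C"
    using first_index_in_set[of z xs C] vo z(1) by blast
  have "hd xs \<notin> C" using z by (simp add: C_def)
  then have "0 < p" using p(2) hd(1) by (cases p) auto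
  obtain i where i: "i < p" "xs ! i = v" "leftmost_nb E xs (xs ! p) = v"
    by (rule leftmost_nb_of_first_in_closed_set[OF gr con dfs \<open>0 < p\<close> p closed])
  have "0 < i" using i(2) v(2) hd(1) by (cases i) auto
  moreover have "i < length xs" using i(1) p(1) by simp
  ultimately obtain j where j: "j < i" "E (xs ! j) v"
    using dfs_ordering_earlier_neighbour[OF gr con dfs] i(2) by blast
  obtain i' where "i' \<le> j" "leftmost_nb E xs v = xs ! i'"
    by (rule leftmost_nb_earlier[of j xs E v]) (use j i p in auto)
  then have "leftmost_nb E xs v \<noteq> xs ! p"
    using vo(1) p(1) j(1) i(1) by (simp add: nth_eq_iff_index_eq)
  moreover have "xs ! p \<in> V - {hd xs, v}"
    using p(2) \<open>hd xs \<notin> C\<close> by (auto simp: C_def)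
  ultimately show False
    using leaf i(3) unfolding F_branch_leaf_iff[OF v] by auto
qed

lemma not_label_prec_if_dominated:
  fixes A B :: "nat set"
  assumes "finite A" "finite B" "a \<in> A" "\<And>b. b \<in> B \<Longrightarrow> b \<le> a"
  shows "\<not> label_prec A B"
proof (cases "B = {}")
  case False
  have "Max B \<le> a" using assms(2,4) False by simp
  also have "a \<le> Max A" using assms(1,3) by simp
  finally show ?thesis using assms(3) by (auto simp: label_prec_def)
qed (simp add: label_prec_def)

lemma finite_dfs_label: "finite (dfs_label E xs i u)"
  by (rule finite_subset[of _ "Suc ` {..<i}"]) (auto simp: dfs_label_def)

lemma dfs_label_append:
  assumes "i \<le> length ys"
  shows "dfs_label E (ys @ zs) i u = dfs_label E ys i u"
proof -
  have "\<And>j. j < i \<Longrightarrow> (ys @ zs) ! j = ys ! j"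
    using assms by (simp add: nth_append)
  then show ?thesis by (auto simp: dfs_label_def)
qed

lemma dfs_label_eq_if_no_new_neighbour:
  assumes "m \<le> i" "\<And>j. m \<le> j \<Longrightarrow> j < i \<Longrightarrow> \<not> E (xs ! j) u"
  shows "dfs_label E xs i u = dfs_label E xs m u"
proof -
  have "j < i \<and> E (xs ! j) u \<longleftrightarrow> j < m \<and> E (xs ! j) u" for j
    using assms by (cases "j < m") auto
  then show ?thesis unfolding dfs_label_def by simp
qed

lemma not_label_prec_if_adjacent_to_predecessor:
  assumes "i = 0 \<or> E (xs ! (i - 1)) (xs ! i)"
  shows "\<not> label_prec (dfs_label E xs i (xs ! i)) (dfs_label E xs i u)"
proof (cases "i = 0")
  case True
  then show ?thesis by (simp add: dfs_label_def label_prec_def)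
next
  case False
  then have "i \<in> dfs_label E xs i (xs ! i)"
    using assms unfolding dfs_label_def by (auto intro!: exI[of _ "i - 1"])
  moreover have "\<And>b. b \<in> dfs_label E xs i u \<Longrightarrow> b \<le> i"
    by (auto simp: dfs_label_def)
  ultimately show ?thesis
    by (intro not_label_prec_if_dominated finite_dfs_label)
qed

locale split_partition =
  fixes V :: "'a set" and E :: "'a \<Rightarrow> 'a \<Rightarrow> bool" and K I :: "'a set"
  assumes graph: "graph V E"
    and partition: "K \<union> I = V" "K \<inter> I = {}"
    and clique: "\<And>x y. x \<in> K \<Longrightarrow> y \<in> K \<Longrightarrow> x \<noteq> y \<Longrightarrow> E x y"
    and independent: "\<And>x y. x \<in> I \<Longrightarrow> y \<in> I \<Longrightarrow> \<not> E x y"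
begin

lemma finite_K: "finite K" and finite_I: "finite I"
  using graph partition finite_subset[of K V] finite_subset[of I V] by (auto simp: graph_def)

lemma independent_vertex_has_clique_neighbour:
  assumes "connected_graph V E" "2 \<le> card V" "x \<in> I"
  shows "\<exists>k\<in>K. E k x"
proof -
  obtain y where "E x y"
    using connected_graph_has_neighbour[OF graph assms(1,2)] assms(3) partition by blast
  then show ?thesis
    using graph_edge_in[OF graph] graph_sym[OF graph] independent assms(3) partition by blast
qed

lemma dfs_ordering_clique_first:
  assumes ks: "distinct ks" "set ks = K" and nb: "\<And>x. x \<in> I \<Longrightarrow> \<exists>k\<in>K. E k x"
  obtains js where "set js = I" "dfs_ordering V E (ks @ js)"
proof -
  let ?m = "length ks"
  define L where "L x = dfs_label E ks ?m x" for x
  obtain is0 where is0: "set is0 = I" "distinct is0"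
    using finite_I finite_distinct_list by blast
  define js where "js = rev (sort_key (\<lambda>x. Max (L x)) is0)"
  define xs where "xs = ks @ js"
  have js: "set js = I" "distinct js" using is0 by (simp_all add: js_def)
  have sorted: "sorted (rev (map (\<lambda>x. Max (L x)) js))"
    by (simp add: js_def rev_map[symmetric])
  have vo: "vertex_ordering V xs"
    using ks js partition by (auto simp: vertex_ordering_def xs_def)
  have xs_I: "xs ! i = js ! (i - ?m)" "xs ! i \<in> I" if "?m \<le> i" "i < length xs" for i
    using that js(1) by (auto simp: xs_def nth_append)
  have L: "L x \<noteq> {}" if x: "x \<in> I" for x
  proof -
    obtain k where "k \<in> K" "E k x" using nb[OF x] by blast
    then obtain j where "j < ?m" "E (ks ! j) x" using ks(2) by (metis in_set_conv_nth)
    then show ?thesis by (auto simp: L_def dfs_label_def)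
  qed
  have label_I: "dfs_label E xs i x = L x" if "x \<in> I" "?m \<le> i" "i < length xs" for i x
  proof -
    have "dfs_label E xs i x = dfs_label E xs ?m x"
      using that xs_I(2) independent by (intro dfs_label_eq_if_no_new_neighbour) auto
    then show ?thesis by (simp add: L_def xs_def dfs_label_append)
  qed
  have "\<not> label_prec (dfs_label E xs i (xs ! i)) (dfs_label E xs i (xs ! k))"
    if "i < k" "k < length xs" for i k
  proof (cases "i < ?m")
    case True
    then have "i = 0 \<or> E (xs ! (i - 1)) (xs ! i)"
      using ks clique[of "ks ! (i - 1)" "ks ! i"]
      by (cases i) (auto simp: xs_def nth_append nth_eq_iff_index_eq)
    then show ?thesis by (rule not_label_prec_if_adjacent_to_predecessor)
  next
    case False
    then have I: "xs ! i \<in> I" "xs ! k \<in> I" using that xs_I by auto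
    have "Max (L (xs ! k)) \<le> Max (L (xs ! i))"
      using sorted_rev_nth_mono[OF sorted, of "i - ?m" "k - ?m"] False that xs_I(1)
      by (simp add: xs_def)
    then show ?thesis
      using label_I[OF I(1)] label_I[OF I(2)] L[OF I(1)] L[OF I(2)] False that
      by (intro not_label_prec_if_dominated[where a = "Max (L (xs ! i))"])
        (auto simp: L_def finite_dfs_label)
  qed
  then show thesis using that js vo by (auto simp: dfs_ordering_def xs_def)
qed

lemma F_branch_leaf_if_neighbours_precede:
  assumes "ys \<noteq> []" "hd ys \<in> K" "v \<in> V" "v \<notin> set ys"
    and nb: "\<And>w. w \<in> I \<Longrightarrow> \<exists>u\<in>set ys. E u w"
  shows "F_branch_leaf V E (ys @ zs) v"
proof -
  have hd: "hd (ys @ zs) = hd ys" "v \<noteq> hd ys" using assms(1,4) by auto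
  have "leftmost_nb E (ys @ zs) w \<noteq> v" if w: "w \<in> V - {hd ys, v}" for w
  proof (cases "w \<in> K")
    case True
    obtain y ys' where ys: "ys = y # ys'" using assms(1) by (cases ys) auto
    have "leftmost_nb E ([y] @ (ys' @ zs)) w \<in> set [y]"
      using clique[of y w] assms(2) True w ys by (intro leftmost_nb_in_prefix) auto
    then show ?thesis using ys hd(2) by simp
  next
    case False
    then obtain u where "u \<in> set ys" "E u w" using nb w partition by blast
    then show ?thesis using leftmost_nb_in_prefix assms(4) by metis
  qed
  then show ?thesis using F_branch_leaf_iff[of v V "ys @ zs" E] assms(3) hd by auto
qed

lemma F_branch_leaf_if_independent:
  assumes "connected_graph V E" "2 \<le> card V" "v \<in> I"
  shows "\<exists>xs. dfs_ordering V E xs \<and> F_branch_leaf V E xs v"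
proof -
  have nb: "\<And>x. x \<in> I \<Longrightarrow> \<exists>k\<in>K. E k x"
    using independent_vertex_has_clique_neighbour[OF assms(1,2)] .
  obtain ks where ks: "distinct ks" "set ks = K"
    using finite_K finite_distinct_list by blast
  obtain js where "dfs_ordering V E (ks @ js)"
    using dfs_ordering_clique_first[OF ks nb] by blast
  moreover have "ks \<noteq> []" using nb[OF assms(3)] ks(2) by auto
  moreover have "v \<in> V" "v \<notin> set ks" using assms(3) ks(2) partition by auto
  ultimately show ?thesis
    using F_branch_leaf_if_neighbours_precede[of ks v] nb ks(2) by (metis hd_in_set)
qed

lemma F_branch_leaf_if_clique:
  assumes "2 \<le> card V" "v \<in> K" and nb: "\<And>x. x \<in> I \<Longrightarrow> \<exists>k\<in>K - {v}. E k x"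
  shows "\<exists>xs. dfs_ordering V E xs \<and> F_branch_leaf V E xs v"
proof -
  obtain ks where ks: "distinct ks" "set ks = K - {v}"
    using finite_distinct_list[of "K - {v}"] finite_K by blast
  have "ks \<noteq> []"
  proof
    assume "ks = []"
    then have "K - {v} = {}" using ks(2) by simp
    then have "I = {}" using nb by blast
    then have "V \<subseteq> {v}" using ks(2) \<open>ks = []\<close> partition by auto
    then show False using assms(1) card_mono[of "{v}" V] by auto
  qed
  have "distinct (ks @ [v])" "set (ks @ [v]) = K" using ks assms(2) by auto
  moreover have "\<And>x. x \<in> I \<Longrightarrow> \<exists>k\<in>K. E k x" using nb by blast
  ultimately obtain js where "dfs_ordering V E ((ks @ [v]) @ js)"
    by (rule dfs_ordering_clique_first)
  moreover have "F_branch_leaf V E (ks @ v # js) v"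
  proof (rule F_branch_leaf_if_neighbours_precede[OF \<open>ks \<noteq> []\<close>])
    show "hd ks \<in> K" using hd_in_set[OF \<open>ks \<noteq> []\<close>] ks(2) by simp
    show "v \<in> V" "v \<notin> set ks" using assms(2) ks(2) partition by auto
    show "\<And>w. w \<in> I \<Longrightarrow> \<exists>u\<in>set ks. E u w" using nb ks(2) by simp
  qed
  ultimately show ?thesis by auto
qed

lemma F_branch_leaf_if_clique_not_cut_vertex:
  assumes con: "connected_graph V E" and card: "2 \<le> card V"
    and "v \<in> K" and not_cut: "\<not> cut_vertex V E v"
  shows "\<exists>xs. dfs_ordering V E xs \<and> F_branch_leaf V E xs v"
proof (cases "\<forall>x\<in>I. \<exists>k\<in>K - {v}. E k x")
  case True
  then show ?thesis using F_branch_leaf_if_clique[OF card \<open>v \<in> K\<close>] by blast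
next
  case False
  then obtain x where x: "x \<in> I" "\<forall>k\<in>K - {v}. \<not> E k x" by blast
  have "u = v" if "E x u" for u
    using that x independent graph_edge_in[OF graph] graph_sym[OF graph] partition by blast
  then have V: "V = {x, v}"
    using sole_neighbour_not_cut_vertex[OF graph con not_cut] x(1) \<open>v \<in> K\<close> partition by blast
  have "split_partition V E {x} {v}"
    using graph V x(1) \<open>v \<in> K\<close> partition by unfold_locales (auto simp: graph_def)
  then show ?thesis
    using split_partition.F_branch_leaf_if_independent[OF _ con card] by blast
qed

end

theorem theorem14:
  fixes V :: "'a set" and E :: "'a \<Rightarrow> 'a \<Rightarrow> bool" and v :: 'a
  assumes "graph V E" and "connected_graph V E" and "split_graph V E"
    and "card V \<ge> 2" and "v \<in> V"
  shows "(\<exists>xs. dfs_ordering V E xs \<and> F_branch_leaf V E xs v) \<longleftrightarrow> \<not> cut_vertex V E v"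
proof
  assume "\<exists>xs. dfs_ordering V E xs \<and> F_branch_leaf V E xs v"
  then show "\<not> cut_vertex V E v"
    using cut_vertex_not_F_branch_leaf[OF assms(1,2)] by blast
next
  assume not_cut: "\<not> cut_vertex V E v"
  obtain K I where "K \<union> I = V" "K \<inter> I = {}"
    and "\<forall>x\<in>K. \<forall>y\<in>K. x \<noteq> y \<longrightarrow> E x y" and "\<forall>x\<in>I. \<forall>y\<in>I. \<not> E x y"
    using assms(3) unfolding split_graph_def by blast
  then interpret split_partition V E K I
    using assms(1) by unfold_locales auto
  show "\<exists>xs. dfs_ordering V E xs \<and> F_branch_leaf V E xs v"
  proof (cases "v \<in> I")
    case True
    then show ?thesis using F_branch_leaf_if_independent assms(2,4) by blast
  next
    case False
    then have "v \<in> K" using assms(5) partition by blast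
    then show ?thesis
      using F_branch_leaf_if_clique_not_cut_vertex assms(2,4) not_cut by blast
  qed
qed

end
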